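(* Let $\Omega$ be a bounded domain in $\mathbb{R}^N$ with $0\in\Omega$, $1<p<N$, $p^\ast = Np/(N-p)$, let $k\in\mathbb{N}$ with $\lambda_k<\lambda_{k+1}$, and let $\lambda_k\le\lambda<\lambda_{k+1}$. Let $C_0,\rho_0,\eta$ and $C_\rho = \{\pi_{\mathcal{M}}(u_\rho):u\in C_0\}$ be as in the context, and let $c_1>0$ be a constant such that $C_\rho\subset\Psi^{\lambda_k + c_1\rho^{N-p}}$ for all $\rho\in(0,\rho_0/2]$. Let $E_0(u) = \int_\Omega(\frac1p|\nabla u|^p - \frac\lambda p|u|^p - \frac1{p^\ast}|u|^{p^\ast})dx$. Then there is a constant $c_6>0$ such that for every $\rho\in(0,\rho_0/2]$: \[ \sup_{v\in C_\rho,\ t\ge0}E_0(tv) \le \begin{cases} 0 & \text{if } \lambda_k + c_1\rho^{N-p}\le\lambda<\lambda_{k+1},\\ c_6\,\rho^{N(N-p)/p} & \text{if } \lambda = \lambda_k.\end{cases} \]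
   Context: Work in $W^{1,p}_0(\Omega)$ with norm $\|u\| = \|\nabla u\|_{L^p}$. $\mathcal{M} = \{u:\|u\|^p=p\}$, $\Psi(u) = p/\|u\|_{L^p}^p$ on $\mathcal{M}$, $\Psi^a = \{u\in\mathcal{M}:\Psi(u)\le a\}$, $\pi_{\mathcal{M}}(u) = p^{1/p}u/\|u\|$. $i(\cdot)$ is the Fadell–Rabinowitz $\mathbb{Z}_2$-cohomological index, and $\lambda_k = \inf\{\sup_M\Psi: M\subset\mathcal{M}\text{ symmetric}, i(M)\ge k\}$. $C_0$ is a compact symmetric subset of $\Psi^{\lambda_k}$ with $i(C_0)=k$, bounded in $L^\infty(\Omega)$ and in $C^1(K)$ for each compact $K\subset\Omega$. $\rho_0 = \operatorname{dist}(0,\partial\Omega)$; $\eta:[0,\infty)\to[0,1]$ smooth, $\eta=0$ on $[0,3/4]$, $\eta=1$ on $[1,\infty)$; $u_\rho(x) = \eta(|x|/\rho)u(x)$. *)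

theory Defs
  imports "HOL-Analysis.Analysis"
begin

coinductive cinf :: "('a::euclidean_space \<Rightarrow> real) \<Rightarrow> bool" where
  "(\<forall>x. f differentiable (at x)) \<Longrightarrow>
   (\<forall>b\<in>Basis. cinf (\<lambda>x. frechet_derivative f (at x) b)) \<Longrightarrow> cinf f"

definition grad :: "('a::euclidean_space \<Rightarrow> real) \<Rightarrow> 'a \<Rightarrow> 'a" where
  "grad f x = (\<Sum>b\<in>Basis. frechet_derivative f (at x) b *\<^sub>R b)"

definition test_fun :: "'a::euclidean_space set \<Rightarrow> ('a \<Rightarrow> real) \<Rightarrow> bool" where
  "test_fun \<Omega> \<phi> \<longleftrightarrow> cinf \<phi> \<and> compact (closure {x. \<phi> x \<noteq> 0})
       \<and> closure {x. \<phi> x \<noteq> 0} \<subseteq> \<Omega>"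

abbreviation intO :: "'a::euclidean_space set \<Rightarrow> ('a \<Rightarrow> real) \<Rightarrow> real" where
  "intO \<Omega> f \<equiv> integral\<^sup>L (lebesgue_on \<Omega>) f"

definition Lp :: "'a::euclidean_space set \<Rightarrow> real \<Rightarrow> ('a \<Rightarrow> real) \<Rightarrow> bool" where
  "Lp \<Omega> p u \<longleftrightarrow> u \<in> borel_measurable (lebesgue_on \<Omega>)
      \<and> integrable (lebesgue_on \<Omega>) (\<lambda>x. \<bar>u x\<bar> powr p)"

definition weak_grad :: "'a::euclidean_space set \<Rightarrow> real \<Rightarrow> ('a \<Rightarrow> real) \<Rightarrow> ('a \<Rightarrow> 'a) \<Rightarrow> bool" where
  "weak_grad \<Omega> p u g \<longleftrightarrow> Lp \<Omega> p u
      \<and> (\<forall>b\<in>Basis. Lp \<Omega> p (\<lambda>x. g x \<bullet> b))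
      \<and> (\<forall>\<phi>. test_fun \<Omega> \<phi> \<longrightarrow> (\<forall>b\<in>Basis.
            intO \<Omega> (\<lambda>x. u x * frechet_derivative \<phi> (at x) b)
            = - intO \<Omega> (\<lambda>x. (g x \<bullet> b) * \<phi> x)))"

definition W01p :: "'a::euclidean_space set \<Rightarrow> real \<Rightarrow> ('a \<Rightarrow> real) \<Rightarrow> bool" where
  "W01p \<Omega> p u \<longleftrightarrow> (\<exists>g \<phi>. weak_grad \<Omega> p u g \<and> (\<forall>n. test_fun \<Omega> (\<phi> n))
      \<and> (\<lambda>n. intO \<Omega> (\<lambda>x. \<bar>\<phi> n x - u x\<bar> powr p)) \<longlonglongrightarrow> 0
      \<and> (\<lambda>n. intO \<Omega> (\<lambda>x. norm (grad (\<phi> n) x - g x) powr p)) \<longlonglongrightarrow> 0)"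

(* \<integral>_Omega |\<nabla>u|^p, i.e. \<parallel>u\<parallel>^p.  The weak gradient is unique a.e., so the
   infimum below is just the value for (any) weak gradient. *)
definition gradp :: "'a::euclidean_space set \<Rightarrow> real \<Rightarrow> ('a \<Rightarrow> real) \<Rightarrow> real" where
  "gradp \<Omega> p u = Inf {intO \<Omega> (\<lambda>x. norm (g x) powr p) | g. weak_grad \<Omega> p u g}"

definition Wnorm :: "'a::euclidean_space set \<Rightarrow> real \<Rightarrow> ('a \<Rightarrow> real) \<Rightarrow> real" where
  "Wnorm \<Omega> p u = gradp \<Omega> p u powr (1 / p)"

definition Lpow :: "'a::euclidean_space set \<Rightarrow> real \<Rightarrow> ('a \<Rightarrow> real) \<Rightarrow> real" where
  "Lpow \<Omega> q u = intO \<Omega> (\<lambda>x. \<bar>u x\<bar> powr q)"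

definition Mfd :: "'a::euclidean_space set \<Rightarrow> real \<Rightarrow> ('a \<Rightarrow> real) set" where
  "Mfd \<Omega> p = {u. W01p \<Omega> p u \<and> Wnorm \<Omega> p u powr p = p}"

definition Psi :: "'a::euclidean_space set \<Rightarrow> real \<Rightarrow> ('a \<Rightarrow> real) \<Rightarrow> real" where
  "Psi \<Omega> p u = p / Lpow \<Omega> p u"

definition Psi_le :: "'a::euclidean_space set \<Rightarrow> real \<Rightarrow> real \<Rightarrow> ('a \<Rightarrow> real) set" where
  "Psi_le \<Omega> p a = {u \<in> Mfd \<Omega> p. Psi \<Omega> p u \<le> a}"

definition proj_M :: "'a::euclidean_space set \<Rightarrow> real \<Rightarrow> ('a \<Rightarrow> real) \<Rightarrow> ('a \<Rightarrow> real)" where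
  "proj_M \<Omega> p u = (\<lambda>x. p powr (1 / p) * u x / Wnorm \<Omega> p u)"

definition symmetric_set :: "('a \<Rightarrow> real) set \<Rightarrow> bool" where
  "symmetric_set A \<longleftrightarrow> (\<forall>u\<in>A. (\<lambda>x. - u x) \<in> A)"

definition W_compact :: "'a::euclidean_space set \<Rightarrow> real \<Rightarrow> ('a \<Rightarrow> real) set \<Rightarrow> bool" where
  "W_compact \<Omega> p C \<longleftrightarrow> (\<forall>f. (\<forall>n. f n \<in> C) \<longrightarrow>
      (\<exists>r u. strict_mono (r :: nat \<Rightarrow> nat) \<and> u \<in> C \<and>
         (\<lambda>n. Wnorm \<Omega> p (\<lambda>x. f (r n) x - u x)) \<longlonglongrightarrow> 0))"

(* minimax values \<lambda>_k, relative to a (cohomological) index function ind *)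
definition lam :: "(('a::euclidean_space \<Rightarrow> real) set \<Rightarrow> enat) \<Rightarrow> 'a set \<Rightarrow> real \<Rightarrow> nat \<Rightarrow> real" where
  "lam ind \<Omega> p k = Inf {Sup (Psi \<Omega> p ` A) | A. A \<subseteq> Mfd \<Omega> p \<and> symmetric_set A \<and> ind A \<ge> enat k}"

definition pstar :: "'a::euclidean_space itself \<Rightarrow> real \<Rightarrow> real" where
  "pstar _ p = real DIM('a) * p / (real DIM('a) - p)"

definition E0 :: "'a::euclidean_space set \<Rightarrow> real \<Rightarrow> real \<Rightarrow> ('a \<Rightarrow> real) \<Rightarrow> real" where
  "E0 \<Omega> p lmb u = gradp \<Omega> p u / p - lmb / p * Lpow \<Omega> p u
      - Lpow \<Omega> (pstar TYPE('a) p) u / pstar TYPE('a) p"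

end

theory Submission
  imports Defs
begin

text \<open>
  Along a ray, E_0 (t v) = t^p (1 - \<lambda> |v|_p^p / p) - t^{p*} |v|_{p*}^{p*} / p* for v \<in> M,
  and \<Psi> v \<le> \<mu> means p \<le> \<mu> |v|_p^p. If \<mu> \<le> \<lambda> the first term is nonpositive.
  Otherwise it is at most a t^p with a = (\<mu> - \<lambda>) |v|_p^p / p, and a t^p - b t^{p*} is bounded
  by its first term at the point where the two terms agree. Together with Hoelder's inequality
  |v|_p^{p p*} \<le> |v|_{p*}^{p* p} |\<Omega>|^{p* - p} this gives
  E_0 (t v) \<le> ((\<mu> - \<lambda>) / p)^{N/p} (p*)^{(N-p)/p} |\<Omega>|. For v \<in> C_\<rho> and \<lambda> = \<lambda>_k we have
  \<mu> - \<lambda> = c_1 \<rho>^{N-p}, whence the bound c_6 \<rho>^{N(N-p)/p}.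
  Of the hypotheses only the boundedness of \<Omega>, the L^\<infinity> bound on C_0 (which puts the
  cut-off functions into L^{p*}), 0 \<le> \<eta> \<le> 1 and the sublevel inclusion for C_\<rho> are used.
\<close>

lemma mult_powr_diff_le:
  fixes A B t p q :: real
  assumes "0 \<le> A" "0 < B" "0 \<le> t" "0 < p" "p < q"
  shows "A * t powr p - B * t powr q \<le> (A powr q / B powr p) powr (1 / (q - p))"
proof -
  define T where "T = (A / B) powr (1 / (q - p))"
  have AT: "A * T powr p = (A powr q / B powr p) powr (1 / (q - p))"
  proof (cases "A = 0")
    case False
    have "q / (q - p) = 1 + p / (q - p)"
      using assms by (simp add: field_simps)
    then show ?thesis
      using False assms by (simp add: T_def powr_powr powr_divide powr_add)
  qed (use assms in \<open>simp add: T_def\<close>)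
  consider "T \<le> t" | "t \<le> T" by linarith
  then show ?thesis
  proof cases
    case 1
    have "A / B = T powr (q - p)"
      using assms by (simp add: T_def powr_powr)
    also have "\<dots> \<le> t powr (q - p)"
      using 1 assms by (intro powr_mono2) (auto simp: T_def)
    finally have "A \<le> B * t powr (q - p)"
      using assms by (simp add: divide_le_eq mult.commute)
    then have "A * t powr p \<le> B * t powr (q - p) * t powr p"
      by (rule mult_right_mono) simp
    also have "\<dots> = B * t powr q"
      using assms by (cases "t = 0") (simp_all add: mult.assoc flip: powr_add)
    finally show ?thesis
      using powr_ge_zero[of "A powr q / B powr p" "1 / (q - p)"] by linarith
  next
    case 2
    have "A * t powr p \<le> A * T powr p"
      using 2 assms by (intro mult_left_mono powr_mono2) auto
    moreover have "0 \<le> B * t powr q"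
      using assms by simp
    ultimately show ?thesis
      using AT by linarith
  qed
qed

lemma powr_mult_powr_divide:
  fixes c x p a b :: real
  assumes "0 \<le> c" "0 < p"
  shows "(c * x powr a / p) powr b = (c / p) powr b * x powr (a * b)"
proof -
  have "(c / p * x powr a) powr b = (c / p) powr b * (x powr a) powr b"
    using assms by (intro powr_mult)
  then show ?thesis
    by (simp add: powr_powr)
qed

lemma powr_integral_le_integral_powr:
  fixes g :: "'b \<Rightarrow> real"
  assumes M: "finite_measure M" and r: "1 < r" and g: "\<And>x. 0 \<le> g x"
    and ig: "integrable M g" and igr: "integrable M (\<lambda>x. g x powr r)"
  shows "(\<integral>x. g x \<partial>M) powr r \<le> (\<integral>x. g x powr r \<partial>M) * measure M (space M) powr (r - 1)"
proof -
  define L Q m where "L = (\<integral>x. g x \<partial>M)" and "Q = (\<integral>x. g x powr r \<partial>M)"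
    and "m = measure M (space M)"
  have Q: "0 \<le> Q"
    unfolding Q_def by (rule integral_nonneg_AE) simp
  show ?thesis
  proof (cases "L = 0")
    case False
    then have L: "0 < L"
      using integral_nonneg_AE[of g M] g unfolding L_def by fastforce
    have m: "0 < m"
    proof (rule ccontr)
      assume "\<not> 0 < m"
      then have "emeasure M (space M) = 0"
        using M measure_nonneg[of M "space M"] by (simp add: m_def finite_measure.emeasure_eq_measure)
      then have "L = 0"
        unfolding L_def by (intro integral_eq_zero_AE AE_I[of _ _ "space M"]) auto
      with False show False ..
    qed
    define c where "c = L / m"
    have c: "0 < c"
      using L m by (simp add: c_def)
    \<comment> \<open>Jensen's inequality, via Young's inequality at the mean value c of g\<close>
    have Young: "g x / c \<le> g x powr r / (r * c powr r) + (1 - 1 / r)" for x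
    proof -
      have "g x / c * 1 \<le> (g x / c) powr r / r + 1 powr (r / (r - 1)) / (r / (r - 1))"
        using r c g by (intro Youngs_inequality) (auto simp: field_simps)
      then show ?thesis
        using r c g by (simp add: powr_divide field_simps)
    qed
    have "m = (\<integral>x. g x / c \<partial>M)"
      using L m by (simp add: L_def c_def)
    also have "\<dots> \<le> (\<integral>x. g x powr r / (r * c powr r) + (1 - 1 / r) \<partial>M)"
      using Young M ig igr by (intro integral_mono) (auto intro: finite_measure.integrable_const)
    also have "\<dots> = Q / (r * c powr r) + m * (1 - 1 / r)"
      using M igr by (simp add: Q_def m_def finite_measure.integrable_const)
    finally have "m / r \<le> Q / (r * c powr r)"
      by (simp add: algebra_simps)
    then have "m * c powr r \<le> Q"
      using r c by (simp add: field_simps)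
    moreover have "m * c powr r = L powr r / m powr (r - 1)"
      using L m by (simp add: c_def powr_divide powr_diff)
    ultimately show ?thesis
      using m by (simp add: L_def Q_def m_def divide_le_eq)
  qed (use Q r in \<open>simp add: L_def Q_def\<close>)
qed

lemma powr_integral_abs_powr_le:
  fixes f :: "'b \<Rightarrow> real"
  assumes M: "finite_measure M" and pq: "0 < p" "p < q"
    and "integrable M (\<lambda>x. \<bar>f x\<bar> powr p)" "integrable M (\<lambda>x. \<bar>f x\<bar> powr q)"
  shows "(\<integral>x. \<bar>f x\<bar> powr p \<partial>M) powr q
           \<le> (\<integral>x. \<bar>f x\<bar> powr q \<partial>M) powr p * measure M (space M) powr (q - p)"
proof -
  define L Q m where "L = (\<integral>x. \<bar>f x\<bar> powr p \<partial>M)" and "Q = (\<integral>x. \<bar>f x\<bar> powr q \<partial>M)"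
    and "m = measure M (space M)"
  have Q: "0 \<le> Q" and m: "0 \<le> m"
    by (simp_all add: Q_def m_def integral_nonneg_AE)
  have "(\<lambda>x. (\<bar>f x\<bar> powr p) powr (q / p)) = (\<lambda>x. \<bar>f x\<bar> powr q)"
    using pq by (simp add: powr_powr)
  then have "L powr (q / p) \<le> Q * m powr (q / p - 1)"
    using powr_integral_le_integral_powr[OF M, of "q / p" "\<lambda>x. \<bar>f x\<bar> powr p"] assms
    by (simp add: L_def Q_def m_def)
  then have "(L powr (q / p)) powr p \<le> (Q * m powr (q / p - 1)) powr p"
    using pq by (intro powr_mono2) (auto simp: L_def integral_nonneg_AE)
  also have "(Q * m powr (q / p - 1)) powr p = Q powr p * m powr (q - p)"
    using Q m pq by (simp add: powr_mult powr_powr algebra_simps)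
  finally show ?thesis
    using pq by (simp add: L_def Q_def m_def powr_powr)
qed

lemma integrable_abs_powr_AE_bounded:
  fixes f :: "'b \<Rightarrow> real"
  assumes "finite_measure M" "f \<in> borel_measurable M" "AE x in M. \<bar>f x\<bar> \<le> B" "0 \<le> q"
  shows "integrable M (\<lambda>x. \<bar>f x\<bar> powr q)"
proof (rule finite_measure.integrable_const_bound[OF assms(1)])
  show "AE x in M. norm (\<bar>f x\<bar> powr q) \<le> B powr q"
    using assms(3)
  proof eventually_elim
    case (elim x)
    then show ?case
      using assms(4) by (simp add: powr_mono2)
  qed
  show "(\<lambda>x. \<bar>f x\<bar> powr q) \<in> borel_measurable M"
    using assms(2) by measurable
qed

lemma weak_grad_scale:
  assumes "weak_grad \<Omega> p u g" "0 < p"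
  shows "weak_grad \<Omega> p (\<lambda>x. c * u x) (\<lambda>x. c *\<^sub>R g x)"
proof -
  have Lp_scale: "Lp \<Omega> p (\<lambda>x. c * f x)" if "Lp \<Omega> p f" for f
  proof -
    have "(\<lambda>x. \<bar>c * f x\<bar> powr p) = (\<lambda>x. \<bar>c\<bar> powr p * \<bar>f x\<bar> powr p)"
      by (simp add: abs_mult powr_mult)
    then show ?thesis using that unfolding Lp_def by auto
  qed
  show ?thesis
    using assms unfolding weak_grad_def by (auto intro!: Lp_scale simp: mult.assoc)
qed

lemma weak_grad_scale_iff:
  assumes "0 < p" "c \<noteq> 0"
  shows "weak_grad \<Omega> p (\<lambda>x. c * u x) g \<longleftrightarrow> weak_grad \<Omega> p u (\<lambda>x. (1 / c) *\<^sub>R g x)"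
  using weak_grad_scale[of \<Omega> p u "\<lambda>x. (1 / c) *\<^sub>R g x" c]
    weak_grad_scale[of \<Omega> p "\<lambda>x. c * u x" g "1/c"] assms by auto

lemma gradp_nonneg: "weak_grad \<Omega> p u g \<Longrightarrow> 0 \<le> gradp \<Omega> p u"
  unfolding gradp_def by (intro cInf_greatest) auto

lemma gradp_eq_0_if_weak_grad_0:
  assumes "weak_grad \<Omega> p u (\<lambda>x. 0)"
  shows "gradp \<Omega> p u = 0"
proof (rule antisym)
  show "gradp \<Omega> p u \<le> 0"
    unfolding gradp_def using assms
    by (intro cInf_lower) (force, auto simp: bdd_below_def intro!: exI[of _ 0])
qed (rule gradp_nonneg[OF assms])

lemma weak_grad_0_if_AE_0:
  assumes "Lp \<Omega> p u" "AE x in lebesgue_on \<Omega>. u x = 0"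
  shows "weak_grad \<Omega> p u (\<lambda>x. 0)"
proof -
  have "intO \<Omega> (\<lambda>x. u x * frechet_derivative \<phi> (at x) b) = 0" for \<phi> and b :: 'a
    using assms(2) by (intro integral_eq_zero_AE) (auto elim: AE_mp)
  then show ?thesis
    using assms(1) by (simp add: weak_grad_def Lp_def)
qed

lemma gradp_0: "gradp \<Omega> p (\<lambda>x. 0) = 0"
  by (rule gradp_eq_0_if_weak_grad_0, rule weak_grad_0_if_AE_0) (simp_all add: Lp_def)

lemma gradp_scale:
  assumes "weak_grad \<Omega> p u g" "0 < p" "0 \<le> t"
  shows "gradp \<Omega> p (\<lambda>x. t * u x) = t powr p * gradp \<Omega> p u"
proof (cases "t = 0")
  case True
  then show ?thesis by (simp add: gradp_0)
next
  case False
  let ?S = "{intO \<Omega> (\<lambda>x. norm (g x) powr p) | g. weak_grad \<Omega> p u g}"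
  have grad_iff: "weak_grad \<Omega> p (\<lambda>x. t * u x) h \<longleftrightarrow> weak_grad \<Omega> p u (\<lambda>x. (1 / t) *\<^sub>R h x)"
    for h using weak_grad_scale_iff[OF assms(2) False] .
  have "{intO \<Omega> (\<lambda>x. norm (h x) powr p) | h. weak_grad \<Omega> p (\<lambda>x. t * u x) h}
      = {intO \<Omega> (\<lambda>x. norm (t *\<^sub>R g x) powr p) | g. weak_grad \<Omega> p u g}"
  proof (intro set_eqI iffI; elim CollectE exE conjE)
    fix y h assume "y = intO \<Omega> (\<lambda>x. norm (h x) powr p)" "weak_grad \<Omega> p (\<lambda>x. t * u x) h"
    then show "y \<in> {intO \<Omega> (\<lambda>x. norm (t *\<^sub>R g x) powr p) | g. weak_grad \<Omega> p u g}"
      using False by (auto simp: grad_iff intro!: exI[of _ "\<lambda>x. (1 / t) *\<^sub>R h x"])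
  next
    fix y g assume "y = intO \<Omega> (\<lambda>x. norm (t *\<^sub>R g x) powr p)" "weak_grad \<Omega> p u g"
    then show "y \<in> {intO \<Omega> (\<lambda>x. norm (h x) powr p) | h. weak_grad \<Omega> p (\<lambda>x. t * u x) h}"
      using False by (auto simp: grad_iff intro!: exI[of _ "\<lambda>x. t *\<^sub>R g x"])
  qed
  also have "\<dots> = (*) (t powr p) ` ?S"
    using assms(3) by (auto simp: powr_mult)
  finally have S: "{intO \<Omega> (\<lambda>x. norm (h x) powr p) | h. weak_grad \<Omega> p (\<lambda>x. t * u x) h}
      = (*) (t powr p) ` ?S" .
  have "t powr p * Inf ?S = Inf ((*) (t powr p) ` ?S)"
  proof (rule continuous_at_Inf_mono)
    show "mono ((*) (t powr p))"
      by (simp add: monoI mult_left_mono)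
    show "continuous (at_right (Inf ?S)) ((*) (t powr p))"
      by (intro continuous_intros)
    show "?S \<noteq> {}"
      using assms(1) by blast
    show "bdd_below ?S"
      by (auto simp: bdd_below_def intro!: exI[of _ 0])
  qed
  then show ?thesis
    unfolding gradp_def S by simp
qed

lemma gradp_Mfd:
  assumes "u \<in> Mfd \<Omega> p" "0 < p"
  shows "gradp \<Omega> p u = p"
proof -
  obtain g where "weak_grad \<Omega> p u g"
    using assms(1) by (auto simp: Mfd_def W01p_def)
  then have "0 \<le> gradp \<Omega> p u" by (rule gradp_nonneg)
  moreover have "(gradp \<Omega> p u powr (1 / p)) powr p = p"
    using assms(1) by (simp add: Mfd_def Wnorm_def)
  ultimately show ?thesis
    using assms(2) by (simp add: powr_powr)
qed

lemma Lp_Mfd: "u \<in> Mfd \<Omega> p \<Longrightarrow> Lp \<Omega> p u"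
  by (auto simp: Mfd_def W01p_def weak_grad_def)

lemma Lpow_nonneg: "0 \<le> Lpow \<Omega> q u"
  unfolding Lpow_def by (rule integral_nonneg_AE) simp

lemma Lpow_scale: "0 \<le> t \<Longrightarrow> Lpow \<Omega> q (\<lambda>x. t * u x) = t powr q * Lpow \<Omega> q u"
  by (simp add: Lpow_def abs_mult powr_mult)

lemma Lpow_pos_Mfd:
  assumes "u \<in> Mfd \<Omega> p" "0 < p" "integrable (lebesgue_on \<Omega>) (\<lambda>x. \<bar>u x\<bar> powr q)"
  shows "0 < Lpow \<Omega> q u"
proof (rule ccontr)
  assume "\<not> 0 < Lpow \<Omega> q u"
  then have "Lpow \<Omega> q u = 0"
    using Lpow_nonneg[of \<Omega> q u] by linarith
  then have "AE x in lebesgue_on \<Omega>. \<bar>u x\<bar> powr q = 0"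
    using assms(3) unfolding Lpow_def by (subst integral_nonneg_eq_0_iff_AE[symmetric]) auto
  then have "AE x in lebesgue_on \<Omega>. u x = 0"
    by eventually_elim simp
  then have "gradp \<Omega> p u = 0"
    by (intro gradp_eq_0_if_weak_grad_0 weak_grad_0_if_AE_0 Lp_Mfd[OF assms(1)])
  then show False
    using gradp_Mfd[OF assms(1,2)] assms(2) by simp
qed

lemma Lpow_powr_le_Lpow_powr:
  assumes "\<Omega> \<in> lmeasurable" "0 < p" "p < q" "Lp \<Omega> p u"
    and "integrable (lebesgue_on \<Omega>) (\<lambda>x. \<bar>u x\<bar> powr q)"
  shows "Lpow \<Omega> p u powr q \<le> Lpow \<Omega> q u powr p * measure (lebesgue_on \<Omega>) \<Omega> powr (q - p)"
  using powr_integral_abs_powr_le[OF finite_measure_lebesgue_on[OF assms(1)]] assms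
  by (simp add: Lpow_def Lp_def)

lemma Psi_le_imp_le_mult_Lpow:
  assumes "u \<in> Psi_le \<Omega> p \<mu>" "0 < p"
  shows "p \<le> \<mu> * Lpow \<Omega> p u"
  using assms Lpow_pos_Mfd[of u \<Omega> p p] Lp_Mfd[of u \<Omega> p]
  by (auto simp: Psi_le_def Psi_def Lp_def divide_le_eq)

lemma less_pstar:
  assumes "0 < p" "p < real DIM('a::euclidean_space)"
  shows "p < pstar TYPE('a) p"
  using assms by (simp add: pstar_def field_simps)

lemma pstar_exponents:
  assumes "0 < p" "p < real DIM('a::euclidean_space)"
  shows "pstar TYPE('a) p / (pstar TYPE('a) p - p) = real DIM('a) / p"
    and "p / (pstar TYPE('a) p - p) = (real DIM('a) - p) / p"
  using assms by (auto simp: pstar_def field_simps)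

lemma E0_ray:
  fixes v :: "'a::euclidean_space \<Rightarrow> real"
  assumes "v \<in> Mfd \<Omega> p" "0 < p" "0 \<le> t"
  defines "q \<equiv> pstar TYPE('a) p"
  shows "E0 \<Omega> p lmb (\<lambda>x. t * v x)
           = t powr p * (1 - lmb / p * Lpow \<Omega> p v) - t powr q * Lpow \<Omega> q v / q"
proof -
  obtain g where "weak_grad \<Omega> p v g"
    using assms(1) by (auto simp: Mfd_def W01p_def)
  then have "gradp \<Omega> p (\<lambda>x. t * v x) = t powr p * p"
    using assms gradp_Mfd[OF assms(1,2)] by (simp add: gradp_scale)
  then show ?thesis
    using assms by (simp add: E0_def Lpow_scale field_simps)
qed

lemma E0_ray_nonpos:
  fixes v :: "'a::euclidean_space \<Rightarrow> real"
  assumes "v \<in> Psi_le \<Omega> p \<mu>" "\<mu> \<le> lmb" "0 < p" "p < real DIM('a)" "0 \<le> t"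
  shows "E0 \<Omega> p lmb (\<lambda>x. t * v x) \<le> 0"
proof -
  have v: "v \<in> Mfd \<Omega> p"
    using assms(1) by (simp add: Psi_le_def)
  have "p \<le> lmb * Lpow \<Omega> p v"
    using Psi_le_imp_le_mult_Lpow[OF assms(1,3)] assms(2) Lpow_nonneg[of \<Omega> p v]
    by (meson mult_right_mono order_trans)
  then have "t powr p * (1 - lmb / p * Lpow \<Omega> p v) \<le> 0"
    using assms(3) by (intro mult_nonneg_nonpos) (auto simp: field_simps)
  moreover have "0 \<le> t powr pstar TYPE('a) p * Lpow \<Omega> (pstar TYPE('a) p) v / pstar TYPE('a) p"
    using less_pstar[OF assms(3,4)] assms(3) Lpow_nonneg[of \<Omega> "pstar TYPE('a) p" v] by simp
  ultimately show ?thesis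
    using E0_ray[OF v assms(3,5), of lmb] by linarith
qed

lemma E0_ray_le:
  fixes v :: "'a::euclidean_space \<Rightarrow> real" and p :: real
  defines "N \<equiv> real DIM('a)" and "q \<equiv> pstar TYPE('a) p"
  assumes \<Omega>: "\<Omega> \<in> lmeasurable" and v: "v \<in> Psi_le \<Omega> p \<mu>"
    and "lmb \<le> \<mu>" "0 < p" "p < N" "0 \<le> t"
    and iq: "integrable (lebesgue_on \<Omega>) (\<lambda>x. \<bar>v x\<bar> powr q)"
  shows "E0 \<Omega> p lmb (\<lambda>x. t * v x)
           \<le> ((\<mu> - lmb) / p) powr (N / p) * q powr ((N - p) / p) * measure (lebesgue_on \<Omega>) \<Omega>"
proof -
  define a L Q m where "a = (\<mu> - lmb) / p" and "L = Lpow \<Omega> p v" and "Q = Lpow \<Omega> q v"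
    and "m = measure (lebesgue_on \<Omega>) \<Omega>"
  have vM: "v \<in> Mfd \<Omega> p"
    using v by (simp add: Psi_le_def)
  have pq: "p < q"
    using less_pstar assms by (simp add: N_def q_def)
  have a: "0 \<le> a" and m: "0 \<le> m"
    using assms by (simp_all add: a_def m_def)
  have L: "0 < L" and Q: "0 < Q"
    using Lpow_pos_Mfd[OF vM] Lp_Mfd[OF vM] iq assms by (simp_all add: L_def Q_def Lp_def)
  have holder: "L powr q \<le> Q powr p * m powr (q - p)"
    unfolding L_def Q_def m_def using Lpow_powr_le_Lpow_powr[OF \<Omega> _ pq Lp_Mfd[OF vM] iq] assms by simp
  have "1 - lmb / p * L \<le> a * L"
    using Psi_le_imp_le_mult_Lpow[OF v] assms by (simp add: a_def L_def field_simps)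
  then have "E0 \<Omega> p lmb (\<lambda>x. t * v x) \<le> (a * L) * t powr p - (Q / q) * t powr q"
    using E0_ray[OF vM, of t lmb] assms by (simp add: L_def Q_def q_def mult.commute mult_left_mono)
  also have "\<dots> \<le> ((a * L) powr q / (Q / q) powr p) powr (1 / (q - p))"
    using a L Q pq assms by (intro mult_powr_diff_le) auto
  also have "\<dots> \<le> (a powr q * q powr p * m powr (q - p)) powr (1 / (q - p))"
  proof (rule powr_mono2)
    have "(a * L) powr q / (Q / q) powr p = a powr q * q powr p * (L powr q / Q powr p)"
      using a L Q pq assms by (simp add: powr_mult powr_divide)
    also have "\<dots> \<le> a powr q * q powr p * m powr (q - p)"
      using holder Q by (intro mult_left_mono) (simp_all add: divide_le_eq mult.commute)
    finally show "(a * L) powr q / (Q / q) powr p \<le> a powr q * q powr p * m powr (q - p)" .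
  qed (use pq in auto)
  also have "\<dots> = a powr (N / p) * q powr ((N - p) / p) * m"
    using a m pq pstar_exponents[of p, where 'a='a] assms
    by (simp add: powr_mult powr_powr N_def q_def)
  finally show ?thesis
    by (simp add: a_def m_def)
qed

lemma AE_bounded_proj_M_cutoff:
  assumes "\<forall>s\<ge>0. 0 \<le> \<eta> s \<and> \<eta> s \<le> 1" "0 \<le> \<rho>" "AE x in lebesgue_on \<Omega>. \<bar>u x\<bar> \<le> B"
  shows "\<exists>B'. AE x in lebesgue_on \<Omega>. \<bar>proj_M \<Omega> p (\<lambda>x. \<eta> (norm x / \<rho>) * u x) x\<bar> \<le> B'"
proof -
  define c where "c = \<bar>p powr (1 / p) / Wnorm \<Omega> p (\<lambda>x. \<eta> (norm x / \<rho>) * u x)\<bar>"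
  have c: "0 \<le> c"
    by (simp add: c_def)
  have bound: "\<bar>proj_M \<Omega> p (\<lambda>x. \<eta> (norm x / \<rho>) * u x) x\<bar> \<le> c * \<bar>u x\<bar>" for x
  proof -
    have "\<bar>\<eta> (norm x / \<rho>)\<bar> \<le> 1"
      using assms(1,2) by simp
    then have "\<bar>\<eta> (norm x / \<rho>) * u x\<bar> \<le> \<bar>u x\<bar>"
      by (simp add: abs_mult mult_left_le_one_le)
    moreover have "\<bar>proj_M \<Omega> p (\<lambda>x. \<eta> (norm x / \<rho>) * u x) x\<bar> = c * \<bar>\<eta> (norm x / \<rho>) * u x\<bar>"
      by (simp add: proj_M_def c_def abs_mult)
    ultimately show ?thesis
      using c by (metis mult_left_mono)
  qed
  have "AE x in lebesgue_on \<Omega>. \<bar>proj_M \<Omega> p (\<lambda>x. \<eta> (norm x / \<rho>) * u x) x\<bar> \<le> c * B"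
    using assms(3)
  proof eventually_elim
    case (elim x)
    then show ?case
      using bound[of x] mult_left_mono[OF elim c] by linarith
  qed
  then show ?thesis ..
qed

lemma integrable_abs_powr_cutoff:
  assumes "\<Omega> \<in> lmeasurable" "\<forall>s\<ge>0. 0 \<le> \<eta> s \<and> \<eta> s \<le> 1" "0 \<le> \<rho>"
    and "\<forall>u\<in>C. AE x in lebesgue_on \<Omega>. \<bar>u x\<bar> \<le> B" "0 \<le> q"
    and "v \<in> proj_M \<Omega> p ` (\<lambda>u x. \<eta> (norm x / \<rho>) * u x) ` C" "v \<in> Mfd \<Omega> p"
  shows "integrable (lebesgue_on \<Omega>) (\<lambda>x. \<bar>v x\<bar> powr q)"
proof -
  obtain u where "u \<in> C" and v: "v = proj_M \<Omega> p (\<lambda>x. \<eta> (norm x / \<rho>) * u x)"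
    using assms(6) by blast
  then obtain B' where "AE x in lebesgue_on \<Omega>. \<bar>v x\<bar> \<le> B'"
    using AE_bounded_proj_M_cutoff[OF assms(2,3)] assms(4) by blast
  moreover have "v \<in> borel_measurable (lebesgue_on \<Omega>)"
    using Lp_Mfd[OF assms(7)] by (simp add: Lp_def)
  ultimately show ?thesis
    using finite_measure_lebesgue_on[OF assms(1)] assms(5) by (intro integrable_abs_powr_AE_bounded)
qed

theorem lemma2p5:
  fixes \<Omega> :: "'a::euclidean_space set"
    and p lambda c1 :: real and k :: nat
    and ind :: "('a \<Rightarrow> real) set \<Rightarrow> enat"
    and C0 :: "('a \<Rightarrow> real) set"
    and \<eta> :: "real \<Rightarrow> real"
  assumes dom: "open \<Omega>" "connected \<Omega>" "bounded \<Omega>" "0 \<in> \<Omega>"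
    and p: "1 < p" "p < real DIM('a)"
    and k: "1 \<le> k" "lam ind \<Omega> p k < lam ind \<Omega> p (Suc k)"
    and lambda: "lam ind \<Omega> p k \<le> lambda" "lambda < lam ind \<Omega> p (Suc k)"
    and C0: "W_compact \<Omega> p C0" "symmetric_set C0"
            "C0 \<subseteq> Psi_le \<Omega> p (lam ind \<Omega> p k)" "ind C0 = enat k"
    and C0_Linf: "\<exists>B. \<forall>u\<in>C0. AE x in lebesgue_on \<Omega>. \<bar>u x\<bar> \<le> B"
    and C0_C1: "\<forall>u\<in>C0. (\<forall>x\<in>\<Omega>. u differentiable (at x))
                   \<and> (\<forall>b\<in>Basis. continuous_on \<Omega> (\<lambda>x. frechet_derivative u (at x) b))"
    and C0_C1_bdd: "\<forall>K. compact K \<and> K \<subseteq> \<Omega> \<longrightarrow>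
                   (\<exists>B. \<forall>u\<in>C0. \<forall>x\<in>K. \<bar>u x\<bar> \<le> B \<and> norm (grad u x) \<le> B)"
    and eta: "cinf \<eta>" "\<forall>s\<ge>0. 0 \<le> \<eta> s \<and> \<eta> s \<le> 1"
             "\<forall>s\<in>{0..3/4}. \<eta> s = 0" "\<forall>s\<ge>1. \<eta> s = 1"
    and c1: "c1 > 0"
            "\<forall>\<rho>\<in>{0<..infdist 0 (frontier \<Omega>) / 2}.
               proj_M \<Omega> p ` (\<lambda>u x. \<eta> (norm x / \<rho>) * u x) ` C0
                 \<subseteq> Psi_le \<Omega> p (lam ind \<Omega> p k + c1 * \<rho> powr (real DIM('a) - p))"
  shows "\<exists>c6>0. \<forall>\<rho>\<in>{0<..infdist 0 (frontier \<Omega>) / 2}.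
           (lam ind \<Omega> p k + c1 * \<rho> powr (real DIM('a) - p) \<le> lambda \<longrightarrow>
              (\<forall>v\<in>proj_M \<Omega> p ` (\<lambda>u x. \<eta> (norm x / \<rho>) * u x) ` C0. \<forall>t\<ge>0.
                 E0 \<Omega> p lambda (\<lambda>x. t * v x) \<le> 0))
         \<and> (lambda = lam ind \<Omega> p k \<longrightarrow>
              (\<forall>v\<in>proj_M \<Omega> p ` (\<lambda>u x. \<eta> (norm x / \<rho>) * u x) ` C0. \<forall>t\<ge>0.
                 E0 \<Omega> p lambda (\<lambda>x. t * v x)
                   \<le> c6 * \<rho> powr (real DIM('a) * (real DIM('a) - p) / p)))"
proof -
  define N q m where "N = real DIM('a)" and "q = pstar TYPE('a) p"
    and "m = measure (lebesgue_on \<Omega>) \<Omega>"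
  \<comment> \<open>m + 1 rather than m spares showing that \<Omega> has positive measure\<close>
  define c6 where "c6 = (c1 / p) powr (N / p) * q powr ((N - p) / p) * (m + 1)"
  have "0 < c6"
    using c1(1) p by (simp add: c6_def m_def N_def q_def pstar_def add_nonneg_pos)
  have \<Omega>: "\<Omega> \<in> lmeasurable"
    using dom by (simp add: lmeasurable_open)
  obtain B where B: "\<forall>u\<in>C0. AE x in lebesgue_on \<Omega>. \<bar>u x\<bar> \<le> B"
    using C0_Linf by blast
  have q: "0 \<le> q"
    using less_pstar[of p, where 'a='a] p by (simp add: q_def)
  show ?thesis
  proof (intro exI[of _ c6] conjI \<open>0 < c6\<close> ballI impI allI)
    fix \<rho> v and t :: real
    assume \<rho>: "\<rho> \<in> {0<..infdist 0 (frontier \<Omega>) / 2}"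
      and "lam ind \<Omega> p k + c1 * \<rho> powr (real DIM('a) - p) \<le> lambda"
      and v: "v \<in> proj_M \<Omega> p ` (\<lambda>u x. \<eta> (norm x / \<rho>) * u x) ` C0" and "0 \<le> t"
    moreover have "v \<in> Psi_le \<Omega> p (lam ind \<Omega> p k + c1 * \<rho> powr (real DIM('a) - p))"
      using c1(2) \<rho> v by blast
    ultimately show "E0 \<Omega> p lambda (\<lambda>x. t * v x) \<le> 0"
      using p by (intro E0_ray_nonpos) auto
  next
    fix \<rho> v and t :: real
    assume \<rho>: "\<rho> \<in> {0<..infdist 0 (frontier \<Omega>) / 2}" and "lambda = lam ind \<Omega> p k"
      and v: "v \<in> proj_M \<Omega> p ` (\<lambda>u x. \<eta> (norm x / \<rho>) * u x) ` C0" and "0 \<le> t"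
    moreover have v\<Psi>: "v \<in> Psi_le \<Omega> p (lam ind \<Omega> p k + c1 * \<rho> powr (N - p))"
      using c1(2) \<rho> v unfolding N_def by blast
    moreover have "integrable (lebesgue_on \<Omega>) (\<lambda>x. \<bar>v x\<bar> powr q)"
      using integrable_abs_powr_cutoff[OF \<Omega> eta(2) _ B q v] \<rho> v\<Psi> by (simp add: Psi_le_def)
    ultimately have "E0 \<Omega> p lambda (\<lambda>x. t * v x)
        \<le> (c1 * \<rho> powr (N - p) / p) powr (N / p) * q powr ((N - p) / p) * m"
      using E0_ray_le[OF \<Omega> v\<Psi>, of lambda t] p c1(1) by (simp add: N_def q_def m_def)
    also have "\<dots> = (c1 / p) powr (N / p) * q powr ((N - p) / p) * m * \<rho> powr (N * (N - p) / p)"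
      using c1(1) p by (simp add: powr_mult_powr_divide mult_ac)
    also have "\<dots> \<le> c6 * \<rho> powr (N * (N - p) / p)"
      unfolding c6_def by (intro mult_right_mono mult_left_mono) (simp_all add: m_def)
    finally show "E0 \<Omega> p lambda (\<lambda>x. t * v x)
        \<le> c6 * \<rho> powr (real DIM('a) * (real DIM('a) - p) / p)"
      by (simp add: N_def)
  qed
qed

end
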